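(* Let $n,k$ be integers with $2\le 2k\le n-4$. Let $\eta=(\eta_1<\dots<\eta_l)\in\overline{\mathbb{D}}^{\,\mathrm{o}}_{2k+2}$, where $\overline{\mathbb{D}}^{\,\mathrm{o}}_{2k+2}=\mathbb{D}^{\,\mathrm{o}}_{2k+2}\setminus\{(1,2k+1)\}$ if $2k=n-4$ and $\overline{\mathbb{D}}^{\,\mathrm{o}}_{2k+2}=\mathbb{D}^{\,\mathrm{o}}_{2k+2}$ otherwise. Let $Y_{\eta^*}$ be the Young diagram whose main diagonal consists of exactly the cells $c_{1,1},\dots,c_{l+1,l+1}$ and which satisfies $h_{1,1}=2n-5$, $h_{i,i}=\eta_{l-(i-2)}$ for $2\le i\le l+1$, and $a(c_{i,i})=l(c_{i,i})$ for $1\le i\le l+1$. Let $\lambda$ be the partition whose parts are the hook lengths of the first-column cells of $Y_{\eta^*}$. Then $\lambda$ is a partition of $T_{n,n-2k}=n(n+1)/2-(n-2k)$.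
   Context: $\mathbb{D}^{\,\mathrm{o}}_N$ is the set of partitions of $N$ into distinct odd parts, i.e. sequences $(\eta_1<\dots<\eta_l)$ of odd positive integers with sum $N$ and $l\ge 2$. Young diagrams are in English convention: rows top to bottom, columns left to right, $c_{i,j}$ the cell in row $i$, column $j$; arm $a(c_{i,j})$ = number of cells to its right in its row, leg $l(c_{i,j})$ = number of cells below it in its column, hook length $h_{i,j}=a+l+1$. *)

theory Defs
  imports Main
begin

(* A Young diagram (English convention) is given by its list of row lengths,
   top to bottom: a weakly decreasing list of positive naturals.
   Rows and columns are indexed from 1; cell c_{i,j} is (i,j). *)
definition young :: "nat list \<Rightarrow> bool" where
  "young Y \<longleftrightarrow> sorted_wrt (\<ge>) Y \<and> (\<forall>r \<in> set Y. 0 < r)"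

definition in_diagram :: "nat list \<Rightarrow> nat \<Rightarrow> nat \<Rightarrow> bool" where
  "in_diagram Y i j \<longleftrightarrow> 1 \<le> i \<and> i \<le> length Y \<and> 1 \<le> j \<and> j \<le> Y ! (i - 1)"

definition arm :: "nat list \<Rightarrow> nat \<Rightarrow> nat \<Rightarrow> nat" where
  "arm Y i j = Y ! (i - 1) - j"

definition col_len :: "nat list \<Rightarrow> nat \<Rightarrow> nat" where
  "col_len Y j = card {i. in_diagram Y i j}"

definition leg :: "nat list \<Rightarrow> nat \<Rightarrow> nat \<Rightarrow> nat" where
  "leg Y i j = col_len Y j - i"

definition hook :: "nat list \<Rightarrow> nat \<Rightarrow> nat \<Rightarrow> nat" where
  "hook Y i j = arm Y i j + leg Y i j + 1"

definition distinct_odd_partitions :: "nat \<Rightarrow> nat list set" where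
  "distinct_odd_partitions N =
     {eta. sorted_wrt (<) eta \<and> (\<forall>x \<in> set eta. odd x) \<and> sum_list eta = N \<and> 2 \<le> length eta}"

definition first_col_hooks :: "nat list \<Rightarrow> nat list" where
  "first_col_hooks Y = map (\<lambda>i. hook Y i 1) [1..<length Y + 1]"

definition is_partition_of :: "nat list \<Rightarrow> int \<Rightarrow> bool" where
  "is_partition_of lam T \<longleftrightarrow>
     sorted_wrt (\<ge>) lam \<and> (\<forall>x \<in> set lam. 0 < x) \<and> int (sum_list lam) = T"

end

(* Every cell (i, j) of a Young diagram lies in the hook of exactly one diagonal cell, namely
   (min i j, min i j), so the size of Y is the sum of its diagonal hook lengths, here
   (2n - 5) + |eta| = 2n + 2k - 3.  Since arm and leg of c_{1,1} agree, h_{1,1} = 2m - 1 for the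
   number m of rows, so m = n - 2.  The first-column hook of row i is Y_i + (m - i); these are
   strictly decreasing and positive, and they sum to |Y| + m(m - 1)/2 = n(n + 1)/2 - (n - 2k). *)

theory Submission
  imports Defs
begin

lemma young_nth_antimono:
  assumes "young Y" "i \<le> j" "j < length Y"
  shows "Y ! j \<le> Y ! i"
  using assms sorted_wrt_nth_less[of "(\<ge>)" Y i j] unfolding young_def
  by (cases "i = j") auto

lemma young_nth_pos:
  assumes "young Y" "i < length Y"
  shows "0 < Y ! i"
  using assms unfolding young_def by simp

lemma in_diagram_downward_closed:
  assumes "young Y" "in_diagram Y i j" "1 \<le> i'" "i' \<le> i" "1 \<le> j'" "j' \<le> j"
  shows "in_diagram Y i' j'"
proof -
  have "Y ! (i - 1) \<le> Y ! (i' - 1)"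
    using assms young_nth_antimono[of Y "i' - 1" "i - 1"] unfolding in_diagram_def by auto
  then show ?thesis
    using assms unfolding in_diagram_def by auto
qed

lemma col_len_first:
  assumes "young Y"
  shows "col_len Y 1 = length Y"
proof -
  have "{i. in_diagram Y i 1} = {1..length Y}"
    using young_nth_pos[OF assms] unfolding in_diagram_def by (auto simp: Suc_le_eq)
  then show ?thesis unfolding col_len_def by simp
qed

lemma cells_eq_Sigma:
  "{(i, j). in_diagram Y i j} = (SIGMA i:{1..length Y}. {1..Y ! (i - 1)})"
  unfolding in_diagram_def by auto

lemma card_cells: "card {(i, j). in_diagram Y i j} = sum_list Y"
proof -
  have "card {(i, j). in_diagram Y i j} = (\<Sum>i=1..length Y. Y ! (i - 1))"
    unfolding cells_eq_Sigma by (simp add: card_SigmaI)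
  also have "\<dots> = (\<Sum>i<length Y. Y ! i)"
    by (simp add: sum.atLeast1_atMost_eq)
  finally show ?thesis by (simp add: sum_list_sum_nth atLeast0LessThan)
qed

definition hook_cells :: "nat list \<Rightarrow> nat \<Rightarrow> nat \<Rightarrow> (nat \<times> nat) set" where
  "hook_cells Y i j =
     {(i, j') | j'. j \<le> j' \<and> in_diagram Y i j'} \<union> {(i', j) | i'. i < i' \<and> in_diagram Y i' j}"

lemma card_hook_cells:
  assumes Y: "young Y" and ij: "in_diagram Y i j"
  shows "card (hook_cells Y i j) = hook Y i j"
proof -
  let ?arm_cells = "{(i, j') | j'. j \<le> j' \<and> in_diagram Y i j'}"
  let ?leg = "{i'. i < i' \<and> in_diagram Y i' j}"
  have fin_col: "finite {i'. in_diagram Y i' j}"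
    by (rule finite_subset[of _ "{1..length Y}"]) (auto simp: in_diagram_def)
  have arm_cells_eq: "?arm_cells = (\<lambda>j'. (i, j')) ` {j..Y ! (i - 1)}"
    using ij unfolding in_diagram_def by auto
  then have card_arm: "card ?arm_cells = arm Y i j + 1"
    using ij by (simp add: card_image inj_on_def arm_def in_diagram_def Suc_diff_le)
  have "{i'. in_diagram Y i' j} = {1..i} \<union> ?leg"
    using in_diagram_downward_closed[OF Y ij] ij unfolding in_diagram_def by auto
  then have "col_len Y j = card ({1..i} \<union> ?leg)"
    unfolding col_len_def by simp
  also have "\<dots> = i + card ?leg"
    using fin_col by (subst card_Un_disjoint) auto
  finally have card_leg: "card ?leg = leg Y i j"
    unfolding leg_def by simp
  have hook_cells_eq: "hook_cells Y i j = ?arm_cells \<union> (\<lambda>i'. (i', j)) ` ?leg"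
    unfolding hook_cells_def by auto
  have "card (hook_cells Y i j) = card ?arm_cells + card ((\<lambda>i'. (i', j)) ` ?leg)"
    unfolding hook_cells_eq by (rule card_Un_disjoint) (use fin_col arm_cells_eq in auto)
  also have "card ((\<lambda>i'. (i', j)) ` ?leg) = card ?leg"
    by (simp add: card_image inj_on_def)
  finally show ?thesis
    unfolding card_arm card_leg hook_def by simp
qed

lemma mem_diagonal_hook_cellsD:
  "c \<in> hook_cells Y i i \<Longrightarrow> min (fst c) (snd c) = i"
  unfolding hook_cells_def by auto

lemma cells_eq_UN_diagonal_hooks:
  assumes Y: "young Y" and diag: "\<forall>i \<ge> 1. in_diagram Y i i \<longleftrightarrow> i \<le> d"
  shows "{(i, j). in_diagram Y i j} = (\<Union>i\<in>{1..d}. hook_cells Y i i)"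
proof (intro equalityI subsetI)
  fix c assume "c \<in> {(i, j). in_diagram Y i j}"
  then obtain i j where c: "c = (i, j)" and ij: "in_diagram Y i j" by auto
  define r where "r = min i j"
  have "in_diagram Y r r"
    using in_diagram_downward_closed[OF Y ij] ij unfolding r_def in_diagram_def by auto
  then have "r \<in> {1..d}"
    using diag unfolding in_diagram_def by auto
  moreover have "c \<in> hook_cells Y r r"
    using ij unfolding c r_def hook_cells_def by (cases "i \<le> j") auto
  ultimately show "c \<in> (\<Union>i\<in>{1..d}. hook_cells Y i i)" by blast
qed (auto simp: hook_cells_def)

lemma sum_list_eq_sum_diagonal_hooks:
  assumes Y: "young Y" and diag: "\<forall>i \<ge> 1. in_diagram Y i i \<longleftrightarrow> i \<le> d"
  shows "sum_list Y = (\<Sum>i=1..d. hook Y i i)"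
proof -
  have fin: "finite (hook_cells Y i i)" for i
  proof (rule finite_subset)
    show "hook_cells Y i i \<subseteq> {(i, j). in_diagram Y i j}"
      unfolding hook_cells_def by auto
    show "finite {(i, j). in_diagram Y i j}"
      unfolding cells_eq_Sigma by simp
  qed
  have "sum_list Y = card (\<Union>i\<in>{1..d}. hook_cells Y i i)"
    by (simp only: card_cells[symmetric] cells_eq_UN_diagonal_hooks[OF Y diag])
  also have "\<dots> = (\<Sum>i=1..d. card (hook_cells Y i i))"
  proof (rule card_UN_disjoint)
    show "\<forall>i\<in>{1..d}. \<forall>j\<in>{1..d}. i \<noteq> j \<longrightarrow> hook_cells Y i i \<inter> hook_cells Y j j = {}"
      by (metis disjoint_iff mem_diagonal_hook_cellsD)
  qed (simp_all add: fin)
  also have "\<dots> = (\<Sum>i=1..d. hook Y i i)"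
    using card_hook_cells[OF Y] diag by (intro sum.cong) auto
  finally show ?thesis .
qed

lemma hook_first_col:
  assumes "young Y" "i < length Y"
  shows "hook Y (Suc i) 1 = Y ! i + (length Y - Suc i)"
  using young_nth_pos[OF assms]
  unfolding hook_def arm_def leg_def col_len_first[OF assms(1)] by simp

lemma first_col_hooks_eq:
  assumes "young Y"
  shows "first_col_hooks Y = map (\<lambda>i. Y ! i + (length Y - Suc i)) [0..<length Y]"
proof -
  have "[1..<length Y + 1] = map Suc [0..<length Y]"
    by (simp add: map_Suc_upt)
  then show ?thesis
    unfolding first_col_hooks_def using hook_first_col[OF assms] by simp
qed

lemma first_col_hooks_strictly_decreasing:
  assumes "young Y"
  shows "sorted_wrt (>) (first_col_hooks Y)"
  unfolding first_col_hooks_eq[OF assms] sorted_wrt_map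
proof (rule sorted_wrt_mono_rel[OF _ sorted_wrt_upt])
  fix i j assume "i \<in> set [0..<length Y]" "j \<in> set [0..<length Y]" "i < j"
  then show "Y ! j + (length Y - Suc j) < Y ! i + (length Y - Suc i)"
    using young_nth_antimono[OF assms, of i j] by simp
qed

lemma first_col_hooks_pos:
  assumes "young Y" "x \<in> set (first_col_hooks Y)"
  shows "0 < x"
  using assms young_nth_pos[OF assms(1)] unfolding first_col_hooks_eq[OF assms(1)] by fastforce

lemma double_sum_first_col_hooks:
  assumes "young Y"
  shows "2 * sum_list (first_col_hooks Y) = 2 * sum_list Y + length Y * (length Y - 1)"
proof -
  let ?m = "length Y"
  have "sum_list (first_col_hooks Y) = sum_list Y + (\<Sum>i<?m. ?m - Suc i)"
    unfolding first_col_hooks_eq[OF assms] sum_list_addf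
    by (simp add: map_nth sum_list_sum_nth atLeast0LessThan)
  also have "(\<Sum>i<?m. ?m - Suc i) = (\<Sum>i<?m. i)"
    by (rule sum.nat_diff_reindex)
  finally have "sum_list (first_col_hooks Y) = sum_list Y + (\<Sum>i<?m. i)" .
  moreover have "2 * (\<Sum>i<m. i) = m * (m - 1)" for m :: nat
    by (induction m) (auto simp: algebra_simps)
  ultimately show ?thesis
    by simp
qed

lemma hook_1_1_eq_if_arm_eq_leg:
  assumes "young Y" "Y \<noteq> []" "arm Y 1 1 = leg Y 1 1"
  shows "hook Y 1 1 = 2 * length Y - 1"
  using assms(2,3) unfolding hook_def leg_def col_len_first[OF assms(1)] by (cases "length Y") auto

lemma sum_rev_nth_from_2:
  "(\<Sum>i=2..length xs + 1. xs ! (length xs - (i - 2) - 1)) = sum_list xs"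
proof -
  let ?l = "length xs"
  have "(\<Sum>i=2..?l + 1. xs ! (?l - (i - 2) - 1)) = (\<Sum>i=0+2..<?l+2. xs ! (?l - (i - 2) - 1))"
    by (rule sum.cong) auto
  also have "\<dots> = (\<Sum>i<?l. xs ! (?l - Suc i))"
    unfolding sum.shift_bounds_nat_ivl atLeast0LessThan by simp
  also have "\<dots> = sum_list xs"
    by (simp add: sum.nat_diff_reindex sum_list_sum_nth atLeast0LessThan)
  finally show ?thesis .
qed

theorem proposition4p10:
  fixes n k :: nat and eta :: "nat list" and Y :: "nat list"
  assumes "2 \<le> 2 * k" and "2 * k + 4 \<le> n"
    and "eta \<in> distinct_odd_partitions (2 * k + 2)"
    and "2 * k + 4 = n \<longrightarrow> eta \<noteq> [1, 2 * k + 1]"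
    and "young Y"
    and "\<forall>i \<ge> 1. in_diagram Y i i \<longleftrightarrow> i \<le> length eta + 1"
    and "hook Y 1 1 = 2 * n - 5"
    and "\<forall>i. 2 \<le> i \<and> i \<le> length eta + 1 \<longrightarrow> hook Y i i = eta ! (length eta - (i - 2) - 1)"
    and "\<forall>i. 1 \<le> i \<and> i \<le> length eta + 1 \<longrightarrow> arm Y i i = leg Y i i"
  shows "is_partition_of (first_col_hooks Y) (int n * (int n + 1) div 2 - (int n - 2 * int k))"
proof -
  let ?m = "length Y"
  have "in_diagram Y 1 1"
    using assms(6) by simp
  then have "Y \<noteq> []"
    by (auto simp: in_diagram_def)
  moreover have "arm Y 1 1 = leg Y 1 1"
    using assms(9) by simp
  ultimately have "hook Y 1 1 = 2 * ?m - 1"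
    by (rule hook_1_1_eq_if_arm_eq_leg[OF assms(5)])
  then have rows: "?m + 2 = n"
    using assms(2,7) by linarith
  have "(\<Sum>i=2..length eta + 1. hook Y i i) = sum_list eta"
    unfolding sum_rev_nth_from_2[of eta, symmetric] using assms(8) by (intro sum.cong) auto
  moreover have "sum_list Y = hook Y 1 1 + (\<Sum>i=2..length eta + 1. hook Y i i)"
    unfolding sum_list_eq_sum_diagonal_hooks[OF assms(5,6)]
    by (subst sum.atLeast_Suc_atMost) (simp_all add: numeral_2_eq_2)
  moreover have "sum_list eta = 2 * k + 2"
    using assms(3) unfolding distinct_odd_partitions_def by simp
  ultimately have "int (2 * sum_list (first_col_hooks Y))
      = int (2 * (2 * n - 5 + (2 * k + 2)) + ?m * (?m - 1))"
    using double_sum_first_col_hooks[OF assms(5)] assms(7) by simp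
  then have "2 * int (sum_list (first_col_hooks Y))
      = 2 * (2 * int n - 5 + (2 * int k + 2)) + int ?m * (int ?m - 1)"
    using rows assms(2) by (simp add: of_nat_diff)
  then have "int (sum_list (first_col_hooks Y)) = int n * (int n + 1) div 2 - (int n - 2 * int k)"
    using rows by (auto simp: algebra_simps)
  then show ?thesis
    unfolding is_partition_of_def
    using first_col_hooks_strictly_decreasing[OF assms(5)] first_col_hooks_pos[OF assms(5)]
    by (auto elim: sorted_wrt_mono_rel[rotated])
qed

end
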